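(* Let $k\ge1$, $A,B_1,\dots,B_k,C\in\mathbb{C}^{r\times r}$ with $C+mI$ invertible for all $m\ge0$. Fix $i$ and $n\ge1$ and suppose $B_i+mI$ is invertible for all $m\ge0$. Then $$F_{\mathcal D}[B_i+nI]=F_{\mathcal D}+x_iA\Big[\sum_{n_1=1}^nF_{\mathcal D}[A+I,\,B_i+n_1I,\,C+I]\Big]C^{-1}.$$ Furthermore, if $B_i-n_1I$ is invertible for $0\le n_1\le n$, then $$F_{\mathcal D}[B_i-nI]=F_{\mathcal D}-x_iA\Big[\sum_{n_1=0}^{n-1}F_{\mathcal D}[A+I,\,B_i-n_1I,\,C+I]\Big]C^{-1}.$$
   Context: For $M\in\mathbb{C}^{r\times r}$: $(M)_0=I$, $(M)_m=M(M+I)\cdots(M+(m-1)I)$, $(M)^{-1}_m=((M)_m)^{-1}$. $$F_{\mathcal D}=F_{\mathcal D}[A,B_1,\dots,B_k;C;x_1,\dots,x_k]=\sum_{m_1,\dots,m_k\ge0}(A)_{m_1+\cdots+m_k}\prod_{j=1}^k(B_j)_{m_j}\,(C)^{-1}_{m_1+\cdots+m_k}\prod_{j=1}^k\frac{x_j^{m_j}}{m_j!},$$ $x_j$ scalar variables, matrix products in order of increasing index; identities are of formal power series in the $x_j$. $F_{\mathcal D}[\dots]$ lists only the shifted parameters, all others unchanged. *)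

theory Defs
  imports "HOL-Analysis.Analysis"
begin

type_synonym 'n cmat = "complex^'n^'n"

fun mpoch :: "'n::finite cmat \<Rightarrow> nat \<Rightarrow> 'n cmat" where
  "mpoch M 0 = mat 1"
| "mpoch M (Suc m) = mpoch M m ** (M + mat (of_nat m))"

fun ordprod :: "(nat \<Rightarrow> 'n::finite cmat) \<Rightarrow> nat \<Rightarrow> 'n cmat" where
  "ordprod f 0 = mat 1"
| "ordprod f (Suc n) = ordprod f n ** f n"

text \<open>A formal power series in x_0,...,x_(k-1) with matrix coefficients is represented
  by its coefficient function on multi-indices m :: nat => nat (coefficient of
  prod_j x_j^(m j)); coefficients of multi-indices not supported in {..<k} are 0.\<close>
definition FD :: "nat \<Rightarrow> 'n::finite cmat \<Rightarrow> (nat \<Rightarrow> 'n cmat) \<Rightarrow> 'n cmat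
    \<Rightarrow> (nat \<Rightarrow> nat) \<Rightarrow> 'n cmat" where
  "FD k A B C m =
     (if \<forall>j\<ge>k. m j = 0 then
        (inverse (real (\<Prod>j<k. fact (m j)))) *\<^sub>R
          (mpoch A (\<Sum>j<k. m j) ** ordprod (\<lambda>j. mpoch (B j) (m j)) k
             ** matrix_inv (mpoch C (\<Sum>j<k. m j)))
      else 0)"

definition xmul :: "nat \<Rightarrow> ((nat \<Rightarrow> nat) \<Rightarrow> 'n::finite cmat) \<Rightarrow> (nat \<Rightarrow> nat) \<Rightarrow> 'n cmat" where
  "xmul i G m = (if m i \<ge> 1 then G (m(i := m i - 1)) else 0)"

end

theory Submission imports Defs begin

(* Raising B_i by one changes the coefficient of x^m only through the factor (B_i)_(m_i),
   and the contiguous relation (B+I)_p = (B)_p + p (B+I)_(p-1) of the matrix Pochhammer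
   symbol splits the coefficient into the old one and a term with m_i lowered by one.
   In that term the factor p cancels p! down to (p-1)!, and peeling off the first factors
   A and C of (A)_|m| and (C)_|m| leaves the coefficient of F_D[A+I, B_i+I, C+I] times x_i.
   Iterating n times gives the first identity; the second is the first one applied to
   B_i - nI and solved for F_D[B_i - nI]. *)

lemma matrix_add_rdistrib: "((A::'a::semiring_1^'n^'m) + B) ** C = A ** C + B ** C"
  by (vector matrix_matrix_mult_def sum.distrib[symmetric] field_simps)

lemma mat_add: "mat (a + b) = (mat a + mat b :: 'a::semiring_1^'n^'n)"
  by (vector mat_def)

lemma mat_diff: "mat (a - b) = (mat a - mat b :: 'a::ring_1^'n^'n)"
  by (vector mat_def)

lemma matrix_inv_right: "invertible (M::'a::semiring_1^'n^'n) \<Longrightarrow> M ** matrix_inv M = mat 1"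
  and matrix_inv_left: "invertible (M::'a::semiring_1^'n^'n) \<Longrightarrow> matrix_inv M ** M = mat 1"
  using someI_ex[of "\<lambda>M'. M ** M' = mat 1 \<and> M' ** M = mat 1"]
  unfolding invertible_def matrix_inv_def by auto

lemma matrix_inv_unique:
  assumes "invertible (M::'a::comm_semiring_1^'n^'n)" and "M ** N = mat 1"
  shows "matrix_inv M = N"
  by (metis assms matrix_inv_left matrix_mul_assoc matrix_mul_lid matrix_mul_rid)

lemma matrix_inv_mult:
  fixes X Y :: "'a::comm_semiring_1^'n^'n"
  assumes "invertible X" and "invertible Y"
  shows "matrix_inv (X ** Y) = matrix_inv Y ** matrix_inv X"
proof (rule matrix_inv_unique)
  show "invertible (X ** Y)" using assms by (rule invertible_mult)
  have "X ** Y ** (matrix_inv Y ** matrix_inv X) = X ** (Y ** matrix_inv Y) ** matrix_inv X"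
    by (simp add: matrix_mul_assoc)
  then show "X ** Y ** (matrix_inv Y ** matrix_inv X) = mat 1"
    by (simp add: assms matrix_inv_right)
qed

lemma mat_of_nat_Suc: "M + mat (of_nat (Suc p)) = M + mat 1 + mat (of_nat p)"
  by (simp only: add.assoc mat_add[symmetric] of_nat_Suc)

lemma mpoch_Suc_left: "mpoch M (Suc p) = M ** mpoch (M + mat 1) p"
proof (induction p)
  case 0
  then show ?case by simp
next
  case (Suc p)
  then show ?case by (simp only: mpoch.simps mat_of_nat_Suc matrix_mul_assoc)
qed

lemma mpoch_contiguous:
  "mpoch (M + mat 1) p = mpoch M p + of_nat p *\<^sub>R mpoch (M + mat 1) (p - 1)"
proof (induction p)
  case 0
  then show ?case by simp
next
  case (Suc p)
  let ?Q = "mpoch (M + mat 1) p"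
  have "mpoch (M + mat 1) (Suc p) = ?Q ** (M + mat (of_nat p)) + ?Q"
    by (simp add: add.commute add.left_commute mat_add matrix_add_ldistrib)
  also have "?Q ** (M + mat (of_nat p)) = mpoch M (Suc p) + of_nat p *\<^sub>R ?Q"
  proof (cases p)
    case (Suc q)
    then have "?Q ** (M + mat (of_nat p))
        = mpoch M p ** (M + mat (of_nat p))
          + of_nat p *\<^sub>R (mpoch (M + mat 1) q ** (M + mat (of_nat (Suc q))))"
      using Suc.IH by (simp add: matrix_add_rdistrib scalar_matrix_assoc)
    then show ?thesis
      using Suc by (simp only: mpoch.simps mat_of_nat_Suc)
  qed simp
  finally show ?case
    by (simp add: scaleR_add_left add.assoc)
qed

lemma invertible_mpoch:
  "(\<And>j. invertible (M + mat (of_nat j))) \<Longrightarrow> invertible (mpoch M p)"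
  by (induction p) (auto intro!: invertible_mult simp: invertible_def[of "mat 1"])

lemma matrix_inv_mpoch_Suc:
  assumes "\<And>j. invertible (C + mat (of_nat j))"
  shows "matrix_inv (mpoch C (Suc p)) = matrix_inv (mpoch (C + mat 1) p) ** matrix_inv C"
proof -
  have "invertible (mpoch (C + mat 1) p)"
    using assms by (intro invertible_mpoch) (metis mat_of_nat_Suc)
  moreover have "invertible C"
    using assms[of 0] by simp
  ultimately show ?thesis
    by (simp only: mpoch_Suc_left matrix_inv_mult)
qed

lemma ordprod_cong: "(\<And>j. j < k \<Longrightarrow> f j = g j) \<Longrightarrow> ordprod f k = ordprod g k"
  by (induction k) auto

lemma ordprod_linear_at:
  assumes "\<And>j. j \<noteq> i \<Longrightarrow> g j = h j \<and> q j = h j"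
    and "g i = h i + c *\<^sub>R q i" and "i < k"
  shows "ordprod g k = ordprod h k + c *\<^sub>R ordprod q k"
  using assms(3)
proof (induction k)
  case (Suc k)
  show ?case
  proof (cases "i = k")
    case True
    then have "ordprod g k = ordprod h k" "ordprod q k = ordprod h k"
      using assms(1) by (auto intro!: ordprod_cong)
    then show ?thesis
      using True assms(2)
      by (simp add: matrix_add_ldistrib matrix_scalar_ac scalar_matrix_assoc[symmetric])
  next
    case False
    then show ?thesis
      using Suc assms(1) by (simp add: matrix_add_rdistrib scalar_matrix_assoc)
  qed
qed simp

lemma FD_outside_support: "\<not> (\<forall>j\<ge>k. m j = 0) \<Longrightarrow> FD k A B C m = 0"
  unfolding FD_def by (simp only: if_False)

lemma FD_contiguous_supported:
  fixes A C :: "'n::finite cmat" and B :: "nat \<Rightarrow> 'n cmat"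
  assumes "i < k" and C_inv: "\<And>j. invertible (C + mat (of_nat j))"
    and supp: "\<forall>j\<ge>k. m j = 0" and m_i: "m i = Suc l"
  shows "FD k A (B(i := B i + mat 1)) C m = FD k A B C m
           + A ** FD k (A + mat 1) (B(i := B i + mat 1)) (C + mat 1) (m(i := l)) ** matrix_inv C"
proof -
  define B' where "B' = B(i := B i + mat 1)"
  define m' where "m' = m(i := l)"
  define s where "s = (\<Sum>j<k. m' j)"
  define P where "P = (\<Prod>j<k. fact (m' j) :: nat)"
  define Q where "Q = ordprod (\<lambda>j. mpoch (B' j) (m' j)) k"
  have supp': "\<forall>j\<ge>k. m' j = 0"
    using supp \<open>i < k\<close> by (simp add: m'_def)
  have sum_m: "(\<Sum>j<k. m j) = Suc s"
    using \<open>i < k\<close> m_i by (simp add: s_def m'_def sum.remove)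
  have prod_m: "(\<Prod>j<k. fact (m j) :: nat) = Suc l * P"
    using \<open>i < k\<close> m_i by (simp add: P_def m'_def prod.remove algebra_simps)
  have ordprod_m: "ordprod (\<lambda>j. mpoch (B' j) (m j)) k
      = ordprod (\<lambda>j. mpoch (B j) (m j)) k + of_nat (Suc l) *\<^sub>R Q"
    unfolding Q_def
    by (rule ordprod_linear_at[OF _ _ \<open>i < k\<close>])
      (auto simp: B'_def m'_def m_i mpoch_contiguous[of "B i" "Suc l"] simp del: mpoch.simps)
  have scalar: "inverse (real (Suc l * P)) * real (Suc l) = inverse (real P)"
    by (simp only: of_nat_mult inverse_mult_distrib) (simp del: of_nat_Suc)
  have "FD k A B' C m = FD k A B C m + (inverse (real (Suc l * P)) * real (Suc l)) *\<^sub>R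
      (mpoch A (Suc s) ** Q ** matrix_inv (mpoch C (Suc s)))"
    unfolding FD_def if_P[OF supp] sum_m prod_m ordprod_m
    by (simp only: matrix_add_ldistrib matrix_add_rdistrib scaleR_add_right matrix_scalar_ac
        scalar_matrix_assoc[symmetric] scaleR_scaleR)
  also have "\<dots> = FD k A B C m + inverse (real P) *\<^sub>R
      (mpoch A (Suc s) ** Q ** matrix_inv (mpoch C (Suc s)))"
    unfolding scalar ..
  also have "\<dots> = FD k A B C m + A ** FD k (A + mat 1) B' (C + mat 1) m' ** matrix_inv C"
    unfolding matrix_inv_mpoch_Suc[OF C_inv]
    unfolding FD_def if_P[OF supp'] mpoch_Suc_left
      s_def[symmetric] P_def[symmetric] Q_def[symmetric]
    by (simp only: matrix_scalar_ac scalar_matrix_assoc matrix_mul_assoc)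
  finally show ?thesis
    by (simp add: B'_def m'_def)
qed

lemma FD_contiguous:
  fixes A C :: "'n::finite cmat" and B :: "nat \<Rightarrow> 'n cmat"
  assumes "i < k" and C_inv: "\<And>j. invertible (C + mat (of_nat j))"
  shows "FD k A (B(i := B i + mat 1)) C m = FD k A B C m
           + xmul i (\<lambda>m'. A ** FD k (A + mat 1) (B(i := B i + mat 1)) (C + mat 1) m' ** matrix_inv C) m"
proof (cases "\<forall>j\<ge>k. m j = 0")
  case False
  moreover have "\<not> (\<forall>j\<ge>k. (m(i := m i - 1)) j = 0)"
    using False \<open>i < k\<close> by auto
  ultimately show ?thesis
    by (simp add: xmul_def FD_outside_support)
next
  case True
  show ?thesis
  proof (cases "m i")
    case 0
    then have "(\<lambda>j. mpoch ((B(i := B i + mat 1)) j) (m j)) = (\<lambda>j. mpoch (B j) (m j))"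
      by auto
    with 0 True show ?thesis
      by (simp add: xmul_def FD_def)
  next
    case (Suc l)
    then show ?thesis
      using FD_contiguous_supported[OF \<open>i < k\<close> C_inv True Suc] by (simp add: xmul_def)
  qed
qed

lemma FD_shift_up:
  fixes A C :: "'n::finite cmat" and B :: "nat \<Rightarrow> 'n cmat"
  assumes "i < k" and C_inv: "\<And>j. invertible (C + mat (of_nat j))"
  shows "FD k A (B(i := B i + mat (of_nat n))) C m = FD k A B C m
           + xmul i (\<lambda>m'. A ** (\<Sum>n1\<in>{1..n}.
               FD k (A + mat 1) (B(i := B i + mat (of_nat n1))) (C + mat 1) m') ** matrix_inv C) m"
proof (induction n)
  case 0
  then show ?case by (simp add: xmul_def)
next
  case (Suc n)
  define B' where "B' = B(i := B i + mat (of_nat n))"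
  define F where "F n1 m' = FD k (A + mat 1) (B(i := B i + mat (of_nat n1))) (C + mat 1) m'" for n1 m'
  have "B'(i := B' i + mat 1) = B(i := B i + mat (of_nat (Suc n)))"
    by (simp add: B'_def mat_add ac_simps)
  then have "FD k A (B(i := B i + mat (of_nat (Suc n)))) C m
      = FD k A B' C m + xmul i (\<lambda>m'. A ** F (Suc n) m' ** matrix_inv C) m"
    using FD_contiguous[OF assms, of A B' m] by (simp only: F_def)
  also have "\<dots> = FD k A B C m + xmul i (\<lambda>m'. A ** (\<Sum>n1\<in>{1..n}. F n1 m') ** matrix_inv C) m
      + xmul i (\<lambda>m'. A ** F (Suc n) m' ** matrix_inv C) m"
    using Suc.IH by (simp only: B'_def F_def)
  also have "\<dots> = FD k A B C m
      + xmul i (\<lambda>m'. A ** (\<Sum>n1\<in>{1..Suc n}. F n1 m') ** matrix_inv C) m"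
    by (simp add: xmul_def matrix_add_ldistrib matrix_add_rdistrib add.assoc)
  finally show ?case
    unfolding F_def .
qed

lemma FD_shift_down:
  fixes A C :: "'n::finite cmat" and B :: "nat \<Rightarrow> 'n cmat"
  assumes "i < k" and C_inv: "\<And>j. invertible (C + mat (of_nat j))"
  shows "FD k A (B(i := B i - mat (of_nat n))) C m = FD k A B C m
           - xmul i (\<lambda>m'. A ** (\<Sum>n1<n.
               FD k (A + mat 1) (B(i := B i - mat (of_nat n1))) (C + mat 1) m') ** matrix_inv C) m"
proof -
  define B' where "B' = B(i := B i - mat (of_nat n))"
  define F where "F n1 m' = FD k (A + mat 1) (B(i := B i - mat (of_nat n1))) (C + mat 1) m'" for n1 m'
  have shifted: "B'(i := B' i + mat (of_nat n1)) = B(i := B i - mat (of_nat (n - n1)))"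
    if "n1 \<le> n" for n1
    using that by (simp add: B'_def mat_diff algebra_simps)
  have "(\<Sum>n1\<in>{1..n}. FD k (A + mat 1) (B'(i := B' i + mat (of_nat n1))) (C + mat 1) m')
      = (\<Sum>n1<n. F n1 m')" for m'
  proof -
    have "(\<Sum>n1\<in>{1..n}. FD k (A + mat 1) (B'(i := B' i + mat (of_nat n1))) (C + mat 1) m')
        = (\<Sum>n1\<in>{1..n}. F (n - n1) m')"
      by (rule sum.cong) (simp_all add: shifted F_def)
    also have "\<dots> = (\<Sum>n1<n. F (n - Suc n1) m')"
      by (simp add: sum.atLeast1_atMost_eq)
    also have "\<dots> = (\<Sum>n1<n. F n1 m')"
      by (rule sum.nat_diff_reindex)
    finally show ?thesis .
  qed
  moreover have "B'(i := B' i + mat (of_nat n)) = B"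
    using shifted[of n] by simp
  ultimately show ?thesis
    using FD_shift_up[OF assms, of A B' n m]
    by (simp add: B'_def F_def)
qed

theorem mainTheorem13:
  fixes k i n :: nat and A C :: "'n::finite cmat" and B :: "nat \<Rightarrow> 'n cmat"
  assumes "k \<ge> 1" and "i < k" and "n \<ge> 1"
    and "\<forall>m::nat. invertible (C + mat (of_nat m))"
    and "\<forall>m::nat. invertible (B i + mat (of_nat m))"
  shows "FD k A (B(i := B i + mat (of_nat n))) C =
           (\<lambda>m. FD k A B C m
              + xmul i (\<lambda>m'. A ** (\<Sum>n1\<in>{1..n}.
                    FD k (A + mat 1) (B(i := B i + mat (of_nat n1))) (C + mat 1) m')
                  ** matrix_inv C) m)
       \<and> ((\<forall>n1\<le>n. invertible (B i - mat (of_nat n1))) \<longrightarrow>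
          FD k A (B(i := B i - mat (of_nat n))) C =
           (\<lambda>m. FD k A B C m
              - xmul i (\<lambda>m'. A ** (\<Sum>n1\<in>{0..n-1}.
                    FD k (A + mat 1) (B(i := B i - mat (of_nat n1))) (C + mat 1) m')
                  ** matrix_inv C) m))"
proof -
  have C_inv: "\<And>j. invertible (C + mat (of_nat j))"
    using assms(4) by blast
  have "{0..n-1} = {..<n}"
    using \<open>n \<ge> 1\<close> by auto
  then show ?thesis
    using FD_shift_up[OF \<open>i < k\<close> C_inv] FD_shift_down[OF \<open>i < k\<close> C_inv]
    by (simp add: fun_eq_iff)
qed

end
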